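(* For every positive integer $n$: (a) $\displaystyle cl_b(n)=\sum_{k=0}^{n-1}cl_b(k)\big(1-\vartheta_2(n-k)\big)$; (b) $\displaystyle\sum_{k=0}^{n}cl_b(k)\big(1-h(n-k)\big)=1$, with $h(0)=0$.
   Context: A Carlitz-binary composition of $m$ is an ordered sequence of powers of $2$ (including $1$) summing to $m$ in which each part differs from its adjacent parts. $cl_b(m)$ is the number of Carlitz-binary compositions of $m$, with $cl_b(0)=1$. $\vartheta_2$ is the $2$-adic valuation and $h(m)$ is the number of ones in the binary representation of $m$. *)

theory Defs
  imports "HOL-Computational_Algebra.Primes"
begin

definition carlitz_binary_comps :: "nat \<Rightarrow> nat list set" where
  "carlitz_binary_comps m =
     {xs. (\<forall>x\<in>set xs. \<exists>j. x = 2 ^ j) \<and> sum_list xs = m \<and>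
          (\<forall>i. Suc i < length xs \<longrightarrow> xs ! i \<noteq> xs ! Suc i)}"

definition cl_b :: "nat \<Rightarrow> nat" where
  "cl_b m = card (carlitz_binary_comps m)"

definition theta2 :: "nat \<Rightarrow> nat" where
  "theta2 n = multiplicity (2::nat) n"

fun h :: "nat \<Rightarrow> nat" where
  "h n = (if n = 0 then 0 else n mod 2 + h (n div 2))"

end

theory Submission
  imports Defs
begin

text \<open>Sort the Carlitz-binary compositions of n by their first part s = 2^i. Removing that part
  shows that the number a_s(n) of compositions starting with s satisfies
  a_s(n) + a_s(n - s) = cl_b(n - s), hence a_s(n) is the alternating sum of the cl_b(n - k s), k >= 1.
  Summing over s and collecting the terms with k s = m, the coefficient of cl_b(n - m) is the sum of
  (-1)^(m/2^i + 1) over the 2^i dividing m, which is 1 - theta2(m) because m/2^i is even exactly for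
  i < theta2(m). Part (b) follows from (a) by induction, since h(m) - h(m - 1) = 1 - theta2(m).\<close>

definition carlitz_comps :: "nat set \<Rightarrow> nat \<Rightarrow> nat list set" where
  "carlitz_comps P m = {xs. set xs \<subseteq> P \<and> sum_list xs = m \<and> successively (\<noteq>) xs}"

lemma carlitz_binary_comps_eq: "carlitz_binary_comps m = carlitz_comps (range (\<lambda>j. 2 ^ j)) m"
  unfolding carlitz_binary_comps_def carlitz_comps_def successively_conv_nth by blast

lemma length_le_sum_list_carlitz_comps:
  assumes "0 \<notin> P" "xs \<in> carlitz_comps P m"
  shows "length xs \<le> m"
proof -
  have "set xs \<subseteq> P" using assms(2) by (simp add: carlitz_comps_def)
  with assms(1) have "0 \<notin> set xs" by blast
  then have "length xs \<le> sum_list xs" by (induction xs) auto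
  then show ?thesis using assms(2) by (simp add: carlitz_comps_def)
qed

lemma finite_carlitz_comps:
  assumes "0 \<notin> P"
  shows "finite (carlitz_comps P m)"
proof (rule finite_subset)
  show "carlitz_comps P m \<subseteq> {xs. set xs \<subseteq> {..m} \<and> length xs \<le> m}"
    using length_le_sum_list_carlitz_comps[OF assms] member_le_sum_list
    by (fastforce simp: carlitz_comps_def)
  show "finite {xs. set xs \<subseteq> {..m} \<and> length xs \<le> m}"
    by (rule finite_lists_length_le) simp
qed

lemma carlitz_comps_0:
  assumes "0 \<notin> P"
  shows "carlitz_comps P 0 = {[]}"
proof -
  have "xs = []" if "xs \<in> carlitz_comps P 0" for xs
    using length_le_sum_list_carlitz_comps[OF assms that] by simp
  then show ?thesis by (auto simp: carlitz_comps_def)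
qed

lemma Cons_in_carlitz_comps:
  "s # xs \<in> carlitz_comps P m \<longleftrightarrow>
     s \<in> P \<and> s \<le> m \<and> xs \<in> carlitz_comps P (m - s) \<and> (xs = [] \<or> hd xs \<noteq> s)"
  unfolding carlitz_comps_def by (auto simp: successively_Cons)

definition carlitz_comps_hd :: "nat set \<Rightarrow> nat \<Rightarrow> nat \<Rightarrow> nat list set" where
  "carlitz_comps_hd P s m = {xs \<in> carlitz_comps P m. xs \<noteq> [] \<and> hd xs = s}"

lemma carlitz_comps_hd_empty: "m < s \<Longrightarrow> carlitz_comps_hd P s m = {}"
  unfolding carlitz_comps_hd_def by (auto simp: neq_Nil_conv Cons_in_carlitz_comps)

lemma card_carlitz_comps_hd_rec:
  assumes "0 \<notin> P" "s \<in> P" "s \<le> m"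
  shows "card (carlitz_comps_hd P s m) + card (carlitz_comps_hd P s (m - s)) =
           card (carlitz_comps P (m - s))"
proof -
  let ?T = "{xs \<in> carlitz_comps P (m - s). xs = [] \<or> hd xs \<noteq> s}"
  have "carlitz_comps_hd P s m = Cons s ` ?T"
    using assms by (auto simp: carlitz_comps_hd_def neq_Nil_conv Cons_in_carlitz_comps)
  then have "card (carlitz_comps_hd P s m) = card ?T"
    by (simp add: card_image)
  moreover have "carlitz_comps P (m - s) = ?T \<union> carlitz_comps_hd P s (m - s)"
    by (auto simp: carlitz_comps_hd_def)
  moreover have "card (?T \<union> carlitz_comps_hd P s (m - s)) = card ?T + card (carlitz_comps_hd P s (m - s))"
    by (rule card_Un_disjoint)
       (auto simp: carlitz_comps_hd_def finite_carlitz_comps[OF assms(1)])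
  ultimately show ?thesis by simp
qed

lemma card_carlitz_comps_eq_sum_hd:
  assumes "0 \<notin> P" "m \<noteq> 0"
  shows "card (carlitz_comps P m) = (\<Sum>s\<in>P \<inter> {1..m}. card (carlitz_comps_hd P s m))"
proof -
  have "xs \<in> (\<Union>s\<in>P \<inter> {1..m}. carlitz_comps_hd P s m)" if "xs \<in> carlitz_comps P m" for xs
  proof -
    from that assms(2) obtain s ys where "xs = s # ys"
      by (cases xs) (auto simp: carlitz_comps_def)
    with that assms(1) show ?thesis
      by (auto simp: carlitz_comps_hd_def Cons_in_carlitz_comps Suc_le_eq intro!: gr0I)
  qed
  then have "carlitz_comps P m = (\<Union>s\<in>P \<inter> {1..m}. carlitz_comps_hd P s m)"
    by (auto simp: carlitz_comps_hd_def)
  then have "card (carlitz_comps P m) = card (\<Union>s\<in>P \<inter> {1..m}. carlitz_comps_hd P s m)"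
    by (rule arg_cong)
  also have "\<dots> = (\<Sum>s\<in>P \<inter> {1..m}. card (carlitz_comps_hd P s m))"
    by (rule card_UN_disjoint)
       (auto simp: carlitz_comps_hd_def intro: finite_subset[OF _ finite_carlitz_comps[OF assms(1)]])
  finally show ?thesis .
qed

lemma alternating_solution_of_shift_recurrence:
  fixes a c :: "nat \<Rightarrow> int"
  assumes "0 < s"
    and below: "\<And>m. m < s \<Longrightarrow> a m = 0"
    and rec: "\<And>m. s \<le> m \<Longrightarrow> a m + a (m - s) = c (m - s)"
  shows "a m = (\<Sum>k=1..m div s. (-1) ^ (k + 1) * c (m - s * k))"
proof (induction m rule: less_induct)
  case (less m)
  show ?case
  proof (cases "m < s")
    case True
    then show ?thesis by (simp add: below)
  next
    case False
    define g where "g k = (-1) ^ (k + 1) * c (m - s * k)" for k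
    define q where "q = (m - s) div s"
    have "m div s = Suc q"
      using False \<open>0 < s\<close> by (simp add: q_def le_div_geq)
    have "(\<Sum>k=1..Suc q. g k) = g 1 + (\<Sum>k=Suc 1..Suc q. g k)"
      by (rule sum.atLeast_Suc_atMost) simp
    also have "\<dots> = g 1 + (\<Sum>k=1..q. g (Suc k))"
      by (simp only: sum.shift_bounds_cl_Suc_ivl)
    also have "\<dots> = c (m - s) - (\<Sum>k=1..q. (-1) ^ (k + 1) * c (m - s - s * k))"
      by (simp add: g_def sum_negf[symmetric] diff_diff_add)
    also have "\<dots> = a m"
      using less.IH[of "m - s"] rec[of m] False \<open>0 < s\<close> by (simp add: q_def)
    finally show ?thesis using \<open>m div s = Suc q\<close> by (simp add: g_def)
  qed
qed

lemma sum_atLeastAtMost_div_eq_sum_multiples: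
  fixes p n :: nat
  assumes "0 < p"
  shows "(\<Sum>k=1..n div p. f k (p * k)) = (\<Sum>m | m \<in> {1..n} \<and> p dvd m. f (m div p) m)"
proof -
  have bound: "p * k \<le> n \<longleftrightarrow> k \<le> n div p" for k
    using assms by (simp add: less_eq_div_iff_mult_less_eq ac_simps)
  have "{m. m \<in> {1..n} \<and> p dvd m} = (\<lambda>k. p * k) ` {1..n div p}"
  proof (intro equalityI subsetI)
    fix m assume m: "m \<in> {m. m \<in> {1..n} \<and> p dvd m}"
    then obtain k where k: "m = p * k" by blast
    have "k \<noteq> 0" using m k by auto
    moreover have "k \<le> n div p"
      using m k bound by auto
    ultimately show "m \<in> (\<lambda>k. p * k) ` {1..n div p}"
      using k by auto
  next
    fix m assume "m \<in> (\<lambda>k. p * k) ` {1..n div p}"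
    then obtain k where "m = p * k" "k \<in> {1..n div p}" by (rule imageE)
    then show "m \<in> {m. m \<in> {1..n} \<and> p dvd m}"
      using assms bound by auto
  qed
  moreover have "inj_on (\<lambda>k. p * k) {1..n div p}"
    using assms by (simp add: inj_on_def)
  ultimately show ?thesis
    using assms by (simp add: sum.reindex)
qed

lemma card_carlitz_comps_hd_alternating:
  assumes "0 \<notin> P" "s \<in> P"
  shows "int (card (carlitz_comps_hd P s m)) =
           (\<Sum>k=1..m div s. (-1) ^ (k + 1) * int (card (carlitz_comps P (m - s * k))))"
proof (rule alternating_solution_of_shift_recurrence)
  show "0 < s" using assms by (metis gr0I)
  show "int (card (carlitz_comps_hd P s m)) = 0" if "m < s" for m
    using that by (simp add: carlitz_comps_hd_empty)
  show "int (card (carlitz_comps_hd P s m)) + int (card (carlitz_comps_hd P s (m - s))) =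
          int (card (carlitz_comps P (m - s)))" if "s \<le> m" for m
    using card_carlitz_comps_hd_rec[OF assms that] by linarith
qed

lemma sum_power_of_two_divisors_alternating:
  fixes m :: nat
  assumes "m \<noteq> 0"
  shows "(\<Sum>d | d \<in> range (\<lambda>j. 2 ^ j) \<and> d dvd m. (-1) ^ (m div d + 1) :: int) = 1 - int (theta2 m)"
proof -
  define v where "v = theta2 m"
  obtain q where m: "m = 2 ^ v * q" and "odd q"
    using assms multiplicity_decompose'[of m 2] unfolding v_def theta2_def by auto
  have "(2::nat) ^ i dvd m \<longleftrightarrow> i \<le> v" for i
    unfolding v_def theta2_def using assms by (simp add: power_dvd_iff_le_multiplicity)
  then have divisors: "{d. d \<in> range (\<lambda>j. 2 ^ j) \<and> d dvd m} = (\<lambda>i. 2 ^ i) ` {..v}"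
    by auto
  have sign: "(-1) ^ (m div 2 ^ i + 1) = (if i = v then 1 else -1 :: int)" if "i \<le> v" for i
  proof -
    have "m = 2 ^ i * (2 ^ (v - i) * q)"
      using that by (simp add: m mult.assoc power_add[symmetric])
    then have "m div 2 ^ i = 2 ^ (v - i) * q"
      by simp
    then show ?thesis using \<open>odd q\<close> that by (simp add: power_add)
  qed
  have "(\<Sum>d | d \<in> range (\<lambda>j. 2 ^ j) \<and> d dvd m. (-1) ^ (m div d + 1) :: int) =
        (\<Sum>i\<le>v. (-1) ^ (m div 2 ^ i + 1))"
    unfolding divisors by (subst sum.reindex) (auto intro: inj_onI)
  also have "\<dots> = (\<Sum>i\<le>v. if i = v then 1 else -1)"
    by (rule sum.cong[OF refl], rule sign) simp
  also have "\<dots> = 1 - int v"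
  proof -
    have "{..v} \<inter> - {v} = {..<v}" by auto
    then show ?thesis by (simp add: sum.If_cases)
  qed
  finally show ?thesis unfolding v_def .
qed

lemma cl_b_theta2_recurrence:
  assumes "n \<noteq> 0"
  shows "int (cl_b n) = (\<Sum>k<n. int (cl_b k) * (1 - int (theta2 (n - k))))"
proof -
  let ?P = "range (\<lambda>j. 2 ^ j) :: nat set"
  let ?c = "\<lambda>k. int (cl_b k)"
  have P0: "0 \<notin> ?P" by auto
  have cl: "cl_b k = card (carlitz_comps ?P k)" for k
    by (simp add: cl_b_def carlitz_binary_comps_eq)
  have first_part: "int (card (carlitz_comps_hd ?P s n)) =
      (\<Sum>m | m \<in> {1..n} \<and> s dvd m. (-1) ^ (m div s + 1) * ?c (n - m))" if "s \<in> ?P" for s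
  proof -
    have "0 < s" using that by auto
    then show ?thesis
      using card_carlitz_comps_hd_alternating[OF P0 that, of n]
        sum_atLeastAtMost_div_eq_sum_multiples[where f = "\<lambda>k m. (-1) ^ (k + 1) * ?c (n - m)"]
      by (simp add: cl)
  qed
  have "?c n = (\<Sum>s\<in>?P \<inter> {1..n}. int (card (carlitz_comps_hd ?P s n)))"
    using card_carlitz_comps_eq_sum_hd[OF P0 assms] by (simp add: cl)
  also have "\<dots> = (\<Sum>s\<in>?P \<inter> {1..n}. \<Sum>m | m \<in> {1..n} \<and> s dvd m. (-1) ^ (m div s + 1) * ?c (n - m))"
    using first_part by simp
  also have "\<dots> = (\<Sum>m\<in>{1..n}. \<Sum>s | s \<in> ?P \<inter> {1..n} \<and> s dvd m. (-1) ^ (m div s + 1) * ?c (n - m))"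
    by (rule sum.swap_restrict) simp_all
  also have "\<dots> = (\<Sum>m\<in>{1..n}. ?c (n - m) * (1 - int (theta2 m)))"
  proof (rule sum.cong[OF refl])
    fix m assume m: "m \<in> {1..n}"
    then have "{s. s \<in> ?P \<inter> {1..n} \<and> s dvd m} = {d. d \<in> ?P \<and> d dvd m}"
      by (auto dest: dvd_imp_le)
    then have "(\<Sum>s | s \<in> ?P \<inter> {1..n} \<and> s dvd m. (-1) ^ (m div s + 1) * ?c (n - m)) =
               (\<Sum>d | d \<in> ?P \<and> d dvd m. (-1) ^ (m div d + 1)) * ?c (n - m)"
      by (simp only: sum_distrib_right)
    also have "\<dots> = ?c (n - m) * (1 - int (theta2 m))"
      using m by (subst sum_power_of_two_divisors_alternating) simp_all
    finally show "(\<Sum>s | s \<in> ?P \<inter> {1..n} \<and> s dvd m. (-1) ^ (m div s + 1) * ?c (n - m)) =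
                  ?c (n - m) * (1 - int (theta2 m))" .
  qed
  also have "\<dots> = (\<Sum>k<n. ?c k * (1 - int (theta2 (n - k))))"
    by (rule sum.reindex_bij_witness[where i = "\<lambda>k. n - k" and j = "\<lambda>m. n - m"]) auto
  finally show ?thesis .
qed

declare h.simps [simp del]

lemma h_0 [simp]: "h 0 = 0"
  by (subst h.simps) simp

lemma h_double: "h (2 * k) = h k"
  by (subst h.simps) simp

lemma h_Suc_double: "h (Suc (2 * k)) = Suc (h k)"
  by (subst h.simps) simp

lemma theta2_Suc_double: "theta2 (Suc (2 * k)) = 0"
  unfolding theta2_def by (rule not_dvd_imp_multiplicity_0) simp

lemma theta2_double: "k \<noteq> 0 \<Longrightarrow> theta2 (2 * k) = Suc (theta2 k)"
  unfolding theta2_def by (rule multiplicity_times_same) simp_all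

text \<open>Adding one to n clears its theta2(n + 1) trailing ones and sets the next bit.\<close>

lemma h_Suc_add_theta2: "h (Suc n) + theta2 (Suc n) = Suc (h n)"
proof (induction n rule: less_induct)
  case (less n)
  show ?case
  proof (cases "even n")
    case True
    then obtain k where "n = 2 * k" by (rule evenE)
    then show ?thesis by (simp add: h_double h_Suc_double theta2_Suc_double)
  next
    case False
    then obtain k where n: "n = Suc (2 * k)" by (metis oddE Suc_eq_plus1)
    then have double: "Suc n = 2 * Suc k" by simp
    have "h (Suc n) + theta2 (Suc n) = h (Suc k) + Suc (theta2 (Suc k))"
      unfolding double h_double theta2_double[OF Suc_not_Zero] by simp
    also have "\<dots> = Suc (h n)"
      using less.IH[of k] n by (simp add: h_Suc_double)
    finally show ?thesis .
  qed
qed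

lemma sum_cl_b_one_minus_h: "(\<Sum>k=0..n. int (cl_b k) * (1 - int (h (n - k)))) = 1"
proof (induction n)
  case 0
  have "0 \<notin> range (\<lambda>j. 2 ^ j :: nat)" by auto
  then show ?case by (simp add: cl_b_def carlitz_binary_comps_eq carlitz_comps_0)
next
  case (Suc n)
  let ?c = "\<lambda>k. int (cl_b k)"
  have h_step: "int (h (Suc n - k)) = int (h (n - k)) + 1 - int (theta2 (Suc n - k))" if "k \<le> n" for k
    using h_Suc_add_theta2[of "n - k"] that by (simp add: Suc_diff_le)
  have "(\<Sum>k=0..Suc n. ?c k * (1 - int (h (Suc n - k)))) =
        ?c (Suc n) + (\<Sum>k=0..n. ?c k * (1 - int (h (Suc n - k))))"
    by (simp add: sum.atLeast0_atMost_Suc)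
  also have "(\<Sum>k=0..n. ?c k * (1 - int (h (Suc n - k)))) =
        (\<Sum>k=0..n. ?c k * (1 - int (h (n - k)))) - (\<Sum>k=0..n. ?c k * (1 - int (theta2 (Suc n - k))))"
    unfolding sum_subtractf[symmetric] by (rule sum.cong) (simp_all add: h_step algebra_simps)
  also have "(\<Sum>k=0..n. ?c k * (1 - int (theta2 (Suc n - k)))) = ?c (Suc n)"
    using cl_b_theta2_recurrence[of "Suc n"] by (simp add: atLeast0AtMost lessThan_Suc_atMost)
  finally show ?case using Suc.IH by simp
qed

theorem corollary10:
  fixes n :: nat
  assumes "n \<ge> 1"
  shows "int (cl_b n) = (\<Sum>k=0..n-1. int (cl_b k) * (1 - int (theta2 (n - k))))
         \<and> (\<Sum>k=0..n. int (cl_b k) * (1 - int (h (n - k)))) = 1"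
proof
  have "{0..n-1} = {..<n}" using assms by auto
  then show "int (cl_b n) = (\<Sum>k=0..n-1. int (cl_b k) * (1 - int (theta2 (n - k))))"
    using cl_b_theta2_recurrence[of n] assms by simp
  show "(\<Sum>k=0..n. int (cl_b k) * (1 - int (h (n - k)))) = 1"
    by (rule sum_cl_b_one_minus_h)
qed

end
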